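(* Let $d$ be any positive integer and let $\mathcal{B}(d)=\{B_{j}\}_{j=1}^{J}$ be a partition of $\{1,\dots,d\}$ into consecutive blocks whose cardinalities $b_1,\dots,b_J$ satisfy \[ \max_{1\leq j \leq J-1} \frac{b_{j+1}}{b_{j}} \leq 1+\eta \] for some $\eta>0$. Then for any $\theta\in l_{2}$ and any $\varepsilon>0,\tilde\varepsilon>0$, \[ \inf_{\widehat{Q}\in\mathcal{G}_{\mathrm{BW}}(\mathcal{B}(d))} R(\theta,\widehat{Q}) \leq (1+\eta)\inf_{\widehat{Q}\in\mathcal{G}_{\mathrm{mon}}(\mathcal{B}(d))} R(\theta,\widehat{Q}) +\frac{b_{1}}{2}\log\left(\frac{v^{2}_{\varepsilon}}{v^{2}_{\varepsilon,\tilde{\varepsilon}}}\right). \]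
   Context: Model: for $\theta\in l_2$, $P_{\theta}=\bigotimes_{i\ge1}\mathcal{N}(\theta_{i},\varepsilon^{2})$ (observation $X$) and $Q_{\theta}=\bigotimes_{i\ge1}\mathcal{N}(\theta_{i},\tilde{\varepsilon}^{2})$ (future observation $Y$) on $\mathbb{R}^\infty$. Risk $R(\theta,\widehat Q)=\int l(\theta,\widehat Q(\cdot;x))\,\mathrm dP_\theta(x)$ with $l(\theta,Q)=\int\log\frac{\mathrm dQ_\theta}{\mathrm dQ}\,\mathrm dQ_\theta$ if $Q_\theta\ll Q$, else $\infty$. $v^{2}_{\varepsilon,\tilde{\varepsilon}}=1/(1/\varepsilon^{2}+1/\tilde{\varepsilon}^{2})$, $v^{2}_{\varepsilon}=\varepsilon^{2}$. For $\tau$ with $\tau_i\ge0$, $Q_{\mathrm{G}_{\tau}}(\cdot|X=x)=\bigotimes_{i}\mathcal{N}\Big(\frac{1/\varepsilon^{2}}{1/\varepsilon^{2}+1/\tau^{2}_{i}}x_{i},\ \frac{1}{1/\varepsilon^{2}+1/\tau^{2}_{i}}+\tilde{\varepsilon}^{2}\Big)$ is the Bayesian predictive distribution based on the prior $\bigotimes_i\mathcal N(0,\tau_i^2)$ (coordinates with $\tau_i=0$ give $\mathcal N(0,\tilde\varepsilon^2)$). $\mathcal{G}_{\mathrm{BW}}(\mathcal{B}(d))$ is the set of $Q_{\mathrm{G}_\tau}$ with $\tau=(\tau^{(d)},0,0,\dots)$, $\tau^{(d)}=(\tau_1,\dots,\tau_d)\in[0,\infty)^d$ constant on each block $B_j$;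 $\mathcal{G}_{\mathrm{mon}}(\mathcal{B}(d))$ is the set of $Q_{\mathrm{G}_\tau}$ with $\tau=(\tau^{(d)},0,0,\dots)$ and $\tau_1\ge\tau_2\ge\cdots\ge\tau_d\ge0$. *)

theory Defs
  imports "HOL-Probability.Probability"
begin

text \<open>Coordinates are indexed from 0 (paper index i corresponds to i+1 here).
  The sample space R^infinity is nat => real with the product sigma-algebra.\<close>

definition normal_measure :: "real \<Rightarrow> real \<Rightarrow> real measure" where
  "normal_measure m v = density lborel (normal_density m (sqrt v))"

definition gauss_seq :: "(nat \<Rightarrow> real) \<Rightarrow> (nat \<Rightarrow> real) \<Rightarrow> (nat \<Rightarrow> real) measure" where
  "gauss_seq m v = (\<Pi>\<^sub>M i\<in>UNIV. normal_measure (m i) (v i))"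

text \<open>Kullback-Leibler loss l = int log (dQtheta/dQ) dQtheta if Qtheta << Q, infinity otherwise
  (also infinity if the log-likelihood ratio is not integrable; its negative part is always
  integrable, so the integral is then +infinity).\<close>
definition kl_loss :: "'a measure \<Rightarrow> 'a measure \<Rightarrow> ennreal" where
  "kl_loss Qth Q =
     (if sets Qth = sets Q \<and> absolutely_continuous Q Qth \<and>
         integrable Qth (\<lambda>y. ln (enn2real (RN_deriv Q Qth y)))
      then ennreal (\<integral>y. ln (enn2real (RN_deriv Q Qth y)) \<partial>Qth)
      else \<infinity>)"

definition risk :: "real \<Rightarrow> real \<Rightarrow> (nat \<Rightarrow> real) \<Rightarrow> ((nat \<Rightarrow> real) \<Rightarrow> (nat \<Rightarrow> real) measure) \<Rightarrow> ennreal" where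
  "risk eps eps' \<theta> Qhat =
     (\<integral>\<^sup>+ x. kl_loss (gauss_seq \<theta> (\<lambda>_. eps'\<^sup>2)) (Qhat x) \<partial>(gauss_seq \<theta> (\<lambda>_. eps\<^sup>2)))"

text \<open>Bayesian predictive distribution Q_{G_tau}(. | X = x) for the prior prod N(0, tau_i^2).
  The mean factor (1/eps^2)/(1/eps^2+1/tau^2) and variance 1/(1/eps^2+1/tau^2) are written
  as tau^2/(tau^2+eps^2) and tau^2 eps^2/(tau^2+eps^2), which equal them for tau > 0 and give
  N(0, eps'^2) when tau = 0, as in the paper's convention.\<close>
definition pred_G :: "real \<Rightarrow> real \<Rightarrow> (nat \<Rightarrow> real) \<Rightarrow> (nat \<Rightarrow> real) \<Rightarrow> (nat \<Rightarrow> real) measure" where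
  "pred_G eps eps' \<tau> x =
     gauss_seq (\<lambda>i. (\<tau> i)\<^sup>2 / ((\<tau> i)\<^sup>2 + eps\<^sup>2) * x i)
               (\<lambda>i. (\<tau> i)\<^sup>2 * eps\<^sup>2 / ((\<tau> i)\<^sup>2 + eps\<^sup>2) + eps'\<^sup>2)"

definition block_start :: "(nat \<Rightarrow> nat) \<Rightarrow> nat \<Rightarrow> nat" where
  "block_start b j = (\<Sum>k<j. b k)"

definition block :: "(nat \<Rightarrow> nat) \<Rightarrow> nat \<Rightarrow> nat set" where
  "block b j = {block_start b j ..< block_start b (Suc j)}"

definition consecutive_partition :: "nat \<Rightarrow> (nat \<Rightarrow> nat) \<Rightarrow> nat \<Rightarrow> bool" where
  "consecutive_partition d b J \<longleftrightarrow> (\<forall>j<J. 0 < b j) \<and> (\<Sum>j<J. b j) = d"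

definition G_BW :: "real \<Rightarrow> real \<Rightarrow> nat \<Rightarrow> (nat \<Rightarrow> nat) \<Rightarrow> nat \<Rightarrow> ((nat \<Rightarrow> real) \<Rightarrow> (nat \<Rightarrow> real) measure) set" where
  "G_BW eps eps' d b J = {pred_G eps eps' \<tau> | \<tau>.
     (\<forall>i. 0 \<le> \<tau> i) \<and> (\<forall>i\<ge>d. \<tau> i = 0) \<and>
     (\<forall>j<J. \<forall>i\<in>block b j. \<forall>i'\<in>block b j. \<tau> i = \<tau> i')}"

definition G_mon :: "real \<Rightarrow> real \<Rightarrow> nat \<Rightarrow> ((nat \<Rightarrow> real) \<Rightarrow> (nat \<Rightarrow> real) measure) set" where
  "G_mon eps eps' d = {pred_G eps eps' \<tau> | \<tau>.
     (\<forall>i. 0 \<le> \<tau> i) \<and> (\<forall>i\<ge>d. \<tau> i = 0) \<and> (\<forall>i j. i \<le> j \<and> j < d \<longrightarrow> \<tau> j \<le> \<tau> i)}"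

definition v2 :: "real \<Rightarrow> real \<Rightarrow> real" where
  "v2 eps eps' = 1 / (1 / eps\<^sup>2 + 1 / eps'\<^sup>2)"

end

theory Submission
  imports Defs
begin

text \<open>For a Gaussian prior supported on the first \<open>d\<close> coordinates, the KL risk of its
  predictive distribution is a constant plus \<open>\<Sum>i<d. V(a i) + B i (a i)\<close>, where
  \<open>a i = \<tau> i\<^sup>2 / (\<tau> i\<^sup>2 + \<epsilon>\<^sup>2)\<close> is the shrinkage factor, the variance part \<open>V\<close> is increasing
  and the bias parts \<open>B i\<close> are decreasing, all nonnegative.
  Given a monotone \<open>\<tau>\<close>, give block \<open>j + 1\<close> the value of \<open>\<tau>\<close> at its first index. This value
  dominates \<open>\<tau>\<close> on block \<open>j + 1\<close>, so the bias does not grow there, and is dominated by \<open>\<tau>\<close> on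
  block \<open>j\<close>, so the variance paid on block \<open>j + 1\<close> is at most \<open>b (j + 1) / b j \<le> 1 + \<eta>\<close> times
  the variance paid by \<open>\<tau>\<close> on block \<open>j\<close>. The first block gets a huge value: its bias becomes
  negligible and its variance is at most \<open>b 0 / 2 * ln (1 + \<epsilon>\<^sup>2 / \<epsilon>'\<^sup>2)\<close>, the last term.\<close>

section \<open>Kullback-Leibler loss\<close>

lemma kl_loss_not_absolutely_continuous:
  "\<not> absolutely_continuous Q P \<Longrightarrow> kl_loss P Q = \<infinity>"
  unfolding kl_loss_def by simp

lemma kl_loss_density:
  assumes Q: "prob_space Q" and h[measurable]: "h \<in> borel_measurable Q" and nn: "\<And>y. 0 \<le> h y"
    and P: "P = density Q (\<lambda>y. ennreal (h y))"
  shows "kl_loss P Q = (if integrable P (\<lambda>y. ln (h y)) then ennreal (\<integral>y. ln (h y) \<partial>P) else \<infinity>)"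
proof -
  interpret Q: prob_space Q by fact
  have sets: "sets P = sets Q" using P by simp
  have ac: "absolutely_continuous Q P" unfolding P by (rule absolutely_continuousI_density) simp
  have "AE y in Q. ennreal (h y) = RN_deriv Q P y"
    by (rule Q.RN_deriv_unique) (use P in auto)
  then have "AE y in P. ennreal (h y) = RN_deriv Q P y"
    using absolutely_continuous_AE[OF sets ac] by blast
  then have ae: "AE y in P. ln (enn2real (RN_deriv Q P y)) = ln (h y)"
    by eventually_elim (metis enn2real_ennreal nn)
  have m1: "(\<lambda>y. ln (enn2real (RN_deriv Q P y))) \<in> borel_measurable P"
    unfolding measurable_cong_sets[OF sets refl] by measurable
  have m2: "(\<lambda>y. ln (h y)) \<in> borel_measurable P"
    unfolding measurable_cong_sets[OF sets refl] by measurable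
  show ?thesis
    unfolding kl_loss_def using sets ac integrable_cong_AE[OF m1 m2 ae] integral_cong_AE[OF m1 m2 ae]
    by simp
qed

lemma real_density_exists:
  assumes Q: "prob_space Q" and P: "prob_space P" and sets: "sets P = sets Q"
    and ac: "absolutely_continuous Q P"
  obtains h where "h \<in> borel_measurable Q" "\<And>y. 0 \<le> h y" "P = density Q (\<lambda>y. ennreal (h y))"
proof -
  interpret Q: prob_space Q by fact
  interpret P: prob_space P by fact
  obtain D where D: "D \<in> borel_measurable Q" "AE x in Q. RN_deriv Q P x = ennreal (D x)"
    "\<And>x. 0 \<le> D x"
    using Q.real_RN_deriv[OF _ ac sets] P.finite_measure_axioms by metis
  have "P = density Q (RN_deriv Q P)" using Q.density_RN_deriv[OF ac sets] by simp
  also have "\<dots> = density Q (\<lambda>y. ennreal (D y))"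
    using D by (intro density_cong) auto
  finally show ?thesis using that D by blast
qed

text \<open>The negative part of the log-likelihood ratio is always integrable, since
  \<open>h * (- ln h) \<le> 1\<close>; only the positive part can make the loss infinite.\<close>
lemma nn_integral_neg_ln_density_le_1:
  assumes Q: "prob_space Q" and h[measurable]: "h \<in> borel_measurable Q" and nn: "\<And>y. 0 \<le> h y"
    and P: "P = density Q (\<lambda>y. ennreal (h y))"
  shows "(\<integral>\<^sup>+y. ennreal (- ln (h y)) \<partial>P) \<le> 1"
proof -
  interpret Q: prob_space Q by fact
  have "(\<integral>\<^sup>+y. ennreal (- ln (h y)) \<partial>P) = (\<integral>\<^sup>+y. ennreal (h y) * ennreal (- ln (h y)) \<partial>Q)"
    unfolding P by (rule nn_integral_density) auto
  also have "\<dots> \<le> (\<integral>\<^sup>+y. 1 \<partial>Q)"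
  proof (rule nn_integral_mono)
    fix y
    show "ennreal (h y) * ennreal (- ln (h y)) \<le> 1"
    proof (cases "- ln (h y) \<le> 0")
      case True
      then have "ennreal (- ln (h y)) = 0" by (simp add: ennreal_eq_0_iff)
      then show ?thesis by simp
    next
      case False
      then have h0: "0 < h y" using nn[of y] by (cases "h y = 0") auto
      have "- ln (h y) = ln (1 / h y)" using h0 by (simp add: ln_div)
      also have "\<dots> \<le> 1 / h y - 1" using h0 by (intro ln_le_minus_one) simp
      finally have "h y * (- ln (h y)) \<le> h y * (1 / h y - 1)"
        using h0 by (intro mult_left_mono) auto
      also have "\<dots> \<le> 1" using h0 by (simp add: field_simps)
      finally show ?thesis using False nn[of y]
        by (subst ennreal_mult[symmetric]) (auto simp: ennreal_le_1)
    qed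
  qed
  also have "\<dots> = 1" by (simp add: Q.emeasure_space_1)
  finally show ?thesis .
qed

lemma integral_ln_density_nonneg:
  assumes Q: "prob_space Q" and h[measurable]: "h \<in> borel_measurable Q" and nn: "\<And>y. 0 \<le> h y"
    and P: "P = density Q (\<lambda>y. ennreal (h y))" and "prob_space P"
    and int: "integrable P (\<lambda>y. ln (h y))"
  shows "0 \<le> (\<integral>y. ln (h y) \<partial>P)"
proof -
  interpret Q: prob_space Q by fact
  interpret I: information_space Q "exp 1" by standard simp
  have lg: "log (exp 1) x = ln x" for x by (simp add: log_def)
  have int2: "integrable Q (\<lambda>x. h x * log (exp 1) (h x))"
    using int unfolding P lg by (subst (asm) integrable_density) (auto simp: nn)
  have "0 \<le> KL_divergence (exp 1) Q (density Q h)"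
    by (rule I.KL_nonneg) (use assms int2 in auto)
  also have "KL_divergence (exp 1) Q (density Q h) = (\<integral>x. h x * log (exp 1) (h x) \<partial>Q)"
    by (rule Q.KL_density) (auto simp: nn)
  also have "\<dots> = (\<integral>y. ln (h y) \<partial>P)"
    unfolding P lg by (subst integral_density) (auto simp: nn)
  finally show ?thesis .
qed

lemma distr_pair_measure_snd:
  assumes "prob_space M" "prob_space N"
  shows "distr (M \<Otimes>\<^sub>M N) N snd = N"
proof (intro measure_eqI)
  interpret M: prob_space M by fact
  interpret N: prob_space N by fact
  fix A assume A: "A \<in> sets (distr (M \<Otimes>\<^sub>M N) N snd)"
  then have "emeasure (distr (M \<Otimes>\<^sub>M N) N snd) A = emeasure (M \<Otimes>\<^sub>M N) (space M \<times> A)"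
    by (auto simp: emeasure_distr space_pair_measure dest: sets.sets_into_space
        intro!: arg_cong2[where f=emeasure])
  with A show "emeasure (distr (M \<Otimes>\<^sub>M N) N snd) A = emeasure N A"
    by (simp add: N.emeasure_pair_measure_Times M.emeasure_space_1)
qed simp

lemma absolutely_continuous_pair_measureD:
  assumes "prob_space Q1" "prob_space Q2" "prob_space P1" "prob_space P2"
    and s1: "sets P1 = sets Q1" and s2: "sets P2 = sets Q2"
    and ac: "absolutely_continuous (Q1 \<Otimes>\<^sub>M Q2) (P1 \<Otimes>\<^sub>M P2)"
  shows "absolutely_continuous Q1 P1 \<and> absolutely_continuous Q2 P2"
proof -
  interpret Q1: prob_space Q1 by fact
  interpret Q2: prob_space Q2 by fact
  interpret P1: prob_space P1 by fact
  interpret P2: prob_space P2 by fact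
  have sp: "space P1 = space Q1" "space P2 = space Q2"
    using s1 s2 sets_eq_imp_space_eq by blast+
  have "A \<in> null_sets P1" if A: "A \<in> null_sets Q1" for A
  proof -
    have "A \<times> space Q2 \<in> null_sets (Q1 \<Otimes>\<^sub>M Q2)"
      using A by (simp add: null_sets_def Q2.emeasure_pair_measure_Times)
    then have "A \<times> space P2 \<in> null_sets (P1 \<Otimes>\<^sub>M P2)"
      using ac sp unfolding absolutely_continuous_def by auto
    then show ?thesis
      using A s1 by (simp add: null_sets_def P2.emeasure_pair_measure_Times P2.emeasure_space_1)
  qed
  moreover have "A \<in> null_sets P2" if A: "A \<in> null_sets Q2" for A
  proof -
    have "space Q1 \<times> A \<in> null_sets (Q1 \<Otimes>\<^sub>M Q2)"
      using A by (simp add: null_sets_def Q2.emeasure_pair_measure_Times)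
    then have "space P1 \<times> A \<in> null_sets (P1 \<Otimes>\<^sub>M P2)"
      using ac sp unfolding absolutely_continuous_def by auto
    then show ?thesis
      using A s2 by (simp add: null_sets_def P2.emeasure_pair_measure_Times P1.emeasure_space_1)
  qed
  ultimately show ?thesis unfolding absolutely_continuous_def by blast
qed

lemma ennreal_le_add_ennreal_uminus: "ennreal (a::real) \<le> ennreal (a + b) + ennreal (- b)"
proof -
  have "ennreal a \<le> ennreal (max 0 (a + b) + max 0 (- b))"
    by (intro ennreal_leI) linarith
  also have "\<dots> = ennreal (a + b) + ennreal (- b)"
    by (subst ennreal_plus) (auto simp: ennreal_max_0)
  finally show ?thesis .
qed

lemma integrable_summand:
  assumes int: "integrable M (\<lambda>z. f z + g z)"
    and [measurable]: "f \<in> borel_measurable M" "g \<in> borel_measurable M"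
    and nf: "(\<integral>\<^sup>+z. ennreal (- f z) \<partial>M) \<noteq> \<infinity>" and ng: "(\<integral>\<^sup>+z. ennreal (- g z) \<partial>M) \<noteq> \<infinity>"
  shows "integrable M f"
proof -
  have "(\<integral>\<^sup>+z. ennreal (f z) \<partial>M) \<le> (\<integral>\<^sup>+z. ennreal (f z + g z) + ennreal (- g z) \<partial>M)"
    by (intro nn_integral_mono ennreal_le_add_ennreal_uminus)
  also have "\<dots> = (\<integral>\<^sup>+z. ennreal (f z + g z) \<partial>M) + (\<integral>\<^sup>+z. ennreal (- g z) \<partial>M)"
    by (rule nn_integral_add) auto
  finally have "(\<integral>\<^sup>+z. ennreal (f z) \<partial>M) \<noteq> \<infinity>"
    using int ng unfolding real_integrable_def by (auto simp: top_unique ennreal_add_eq_top)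
  then show ?thesis using nf unfolding real_integrable_def by simp
qed

lemma integrable_pair_measure_sum_iff:
  fixes g1 g2 :: "_ \<Rightarrow> real"
  assumes M1: "prob_space M1" and M2: "prob_space M2"
    and [measurable]: "g1 \<in> borel_measurable M1" "g2 \<in> borel_measurable M2"
    and n1: "(\<integral>\<^sup>+x. ennreal (- g1 x) \<partial>M1) \<noteq> \<infinity>" and n2: "(\<integral>\<^sup>+x. ennreal (- g2 x) \<partial>M2) \<noteq> \<infinity>"
  shows "integrable (M1 \<Otimes>\<^sub>M M2) (\<lambda>z. g1 (fst z) + g2 (snd z)) \<longleftrightarrow> integrable M1 g1 \<and> integrable M2 g2"
proof -
  interpret M2: prob_space M2 by fact
  have d1: "distr (M1 \<Otimes>\<^sub>M M2) M1 fst = M1" by (rule M2.distr_pair_fst)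
  have d2: "distr (M1 \<Otimes>\<^sub>M M2) M2 snd = M2" by (rule distr_pair_measure_snd[OF M1 M2])
  have i1: "integrable (M1 \<Otimes>\<^sub>M M2) (\<lambda>z. g1 (fst z)) \<longleftrightarrow> integrable M1 g1"
    using integrable_distr_eq[of fst "M1 \<Otimes>\<^sub>M M2" M1 g1] d1 by simp
  have i2: "integrable (M1 \<Otimes>\<^sub>M M2) (\<lambda>z. g2 (snd z)) \<longleftrightarrow> integrable M2 g2"
    using integrable_distr_eq[of snd "M1 \<Otimes>\<^sub>M M2" M2 g2] d2 by simp
  have n1': "(\<integral>\<^sup>+z. ennreal (- g1 (fst z)) \<partial>(M1 \<Otimes>\<^sub>M M2)) \<noteq> \<infinity>"
    using nn_integral_distr[of fst "M1 \<Otimes>\<^sub>M M2" M1 "\<lambda>x. ennreal (- g1 x)"] d1 n1 by simp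
  have n2': "(\<integral>\<^sup>+z. ennreal (- g2 (snd z)) \<partial>(M1 \<Otimes>\<^sub>M M2)) \<noteq> \<infinity>"
    using nn_integral_distr[of snd "M1 \<Otimes>\<^sub>M M2" M2 "\<lambda>x. ennreal (- g2 x)"] d2 n2 by simp
  show ?thesis
  proof
    assume int: "integrable (M1 \<Otimes>\<^sub>M M2) (\<lambda>z. g1 (fst z) + g2 (snd z))"
    then have int': "integrable (M1 \<Otimes>\<^sub>M M2) (\<lambda>z. g2 (snd z) + g1 (fst z))"
      by (simp add: add.commute)
    have "integrable (M1 \<Otimes>\<^sub>M M2) (\<lambda>z. g1 (fst z))"
      by (rule integrable_summand[OF int _ _ n1' n2']) measurable
    moreover have "integrable (M1 \<Otimes>\<^sub>M M2) (\<lambda>z. g2 (snd z))"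
      by (rule integrable_summand[OF int' _ _ n2' n1']) measurable
    ultimately show "integrable M1 g1 \<and> integrable M2 g2" using i1 i2 by blast
  qed (use i1 i2 in \<open>auto intro: Bochner_Integration.integrable_add\<close>)
qed

lemma integral_pair_measure_sum:
  fixes g1 g2 :: "_ \<Rightarrow> real"
  assumes M1: "prob_space M1" and M2: "prob_space M2"
    and int1: "integrable M1 g1" and int2: "integrable M2 g2"
  shows "(\<integral>z. g1 (fst z) + g2 (snd z) \<partial>(M1 \<Otimes>\<^sub>M M2)) = (\<integral>x. g1 x \<partial>M1) + (\<integral>x. g2 x \<partial>M2)"
proof -
  interpret M2: prob_space M2 by fact
  have d1: "distr (M1 \<Otimes>\<^sub>M M2) M1 fst = M1" by (rule M2.distr_pair_fst)
  have d2: "distr (M1 \<Otimes>\<^sub>M M2) M2 snd = M2" by (rule distr_pair_measure_snd[OF M1 M2])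
  have [measurable]: "g1 \<in> borel_measurable M1" "g2 \<in> borel_measurable M2" using int1 int2 by auto
  show ?thesis
    using integrable_distr_eq[of fst "M1 \<Otimes>\<^sub>M M2" M1 g1] integral_distr[of fst "M1 \<Otimes>\<^sub>M M2" M1 g1]
      integrable_distr_eq[of snd "M1 \<Otimes>\<^sub>M M2" M2 g2] integral_distr[of snd "M1 \<Otimes>\<^sub>M M2" M2 g2]
      d1 d2 int1 int2
    by (subst Bochner_Integration.integral_add) auto
qed

lemma kl_loss_pair_density:
  assumes Q1: "prob_space Q1" and Q2: "prob_space Q2" and P1: "prob_space P1" and P2: "prob_space P2"
    and h1[measurable]: "h1 \<in> borel_measurable Q1" and h1nn: "\<And>y. 0 \<le> h1 y"
    and h1P: "P1 = density Q1 (\<lambda>y. ennreal (h1 y))"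
    and h2[measurable]: "h2 \<in> borel_measurable Q2" and h2nn: "\<And>y. 0 \<le> h2 y"
    and h2P: "P2 = density Q2 (\<lambda>y. ennreal (h2 y))"
  shows "kl_loss (P1 \<Otimes>\<^sub>M P2) (Q1 \<Otimes>\<^sub>M Q2) = kl_loss P1 Q1 + kl_loss P2 Q2"
proof -
  interpret Q2: prob_space Q2 by fact
  interpret P2: prob_space P2 by fact
  interpret Q12: pair_prob_space Q1 Q2 using Q1 Q2 by (simp add: pair_prob_space_def pair_sigma_finite_def prob_space_imp_sigma_finite)
  define H where "H z = h1 (fst z) * h2 (snd z)" for z
  have Hm[measurable]: "H \<in> borel_measurable (Q1 \<Otimes>\<^sub>M Q2)" unfolding H_def by measurable
  have Hnn: "0 \<le> H z" for z unfolding H_def using h1nn h2nn by simp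
  have P12: "P1 \<Otimes>\<^sub>M P2 = density (Q1 \<Otimes>\<^sub>M Q2) (\<lambda>z. ennreal (H z))"
  proof -
    have "P1 \<Otimes>\<^sub>M P2 = density (Q1 \<Otimes>\<^sub>M Q2) (\<lambda>(x,y). ennreal (h1 x) * ennreal (h2 y))"
      unfolding h1P h2P
      by (rule pair_measure_density) (use h2P P2.sigma_finite_measure_axioms Q2.sigma_finite_measure_axioms in auto)
    also have "(\<lambda>(x,y). ennreal (h1 x) * ennreal (h2 y)) = (\<lambda>z. ennreal (H z))"
      by (auto simp: H_def ennreal_mult h1nn h2nn)
    finally show ?thesis .
  qed
  have g1[measurable]: "(\<lambda>x. ln (h1 x)) \<in> borel_measurable P1" using h1P by simp
  have g2[measurable]: "(\<lambda>x. ln (h2 x)) \<in> borel_measurable P2" using h2P by simp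
  have ae: "AE z in P1 \<Otimes>\<^sub>M P2. ln (H z) = ln (h1 (fst z)) + ln (h2 (snd z))"
  proof -
    have "AE z in P1 \<Otimes>\<^sub>M P2. 0 < H z"
      unfolding P12 by (subst AE_density) (auto simp: Hnn less_le)
    then show ?thesis by eventually_elim (auto simp: H_def ln_mult zero_less_mult_iff h1nn h2nn less_le)
  qed
  have mH: "(\<lambda>z. ln (H z)) \<in> borel_measurable (P1 \<Otimes>\<^sub>M P2)" using P12 by simp
  have mS: "(\<lambda>z. ln (h1 (fst z)) + ln (h2 (snd z))) \<in> borel_measurable (P1 \<Otimes>\<^sub>M P2)" by measurable
  note iH = integrable_cong_AE[OF mH mS ae] and vH = integral_cong_AE[OF mH mS ae]
  have n1: "(\<integral>\<^sup>+x. ennreal (- ln (h1 x)) \<partial>P1) \<noteq> \<infinity>"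
    using nn_integral_neg_ln_density_le_1[OF Q1 h1 h1nn h1P] by (auto simp: top_unique)
  have n2: "(\<integral>\<^sup>+x. ennreal (- ln (h2 x)) \<partial>P2) \<noteq> \<infinity>"
    using nn_integral_neg_ln_density_le_1[OF Q2 h2 h2nn h2P] by (auto simp: top_unique)
  note iff = integrable_pair_measure_sum_iff[OF P1 P2 g1 g2 n1 n2]
  show ?thesis
  proof (cases "integrable P1 (\<lambda>y. ln (h1 y)) \<and> integrable P2 (\<lambda>y. ln (h2 y))")
    case True
    moreover have "0 \<le> (\<integral>x. ln (h1 x) \<partial>P1)" "0 \<le> (\<integral>x. ln (h2 x) \<partial>P2)"
      using integral_ln_density_nonneg[OF Q1 h1 h1nn h1P P1]
        integral_ln_density_nonneg[OF Q2 h2 h2nn h2P P2] True by blast+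
    moreover have "(\<integral>z. ln (h1 (fst z)) + ln (h2 (snd z)) \<partial>(P1 \<Otimes>\<^sub>M P2))
        = (\<integral>x. ln (h1 x) \<partial>P1) + (\<integral>x. ln (h2 x) \<partial>P2)"
      using True by (intro integral_pair_measure_sum[OF P1 P2]) auto
    ultimately show ?thesis
      using iff
      unfolding kl_loss_density[OF Q1 h1 h1nn h1P] kl_loss_density[OF Q2 h2 h2nn h2P]
        kl_loss_density[OF Q12.prob_space_axioms Hm Hnn P12] iH vH
      by (simp add: ennreal_plus)
  next
    case False
    then show ?thesis
      using iff
      unfolding kl_loss_density[OF Q1 h1 h1nn h1P] kl_loss_density[OF Q2 h2 h2nn h2P]
        kl_loss_density[OF Q12.prob_space_axioms Hm Hnn P12] iH
      by auto
  qed
qed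

lemma kl_loss_pair_measure:
  assumes Q1: "prob_space Q1" and Q2: "prob_space Q2" and P1: "prob_space P1" and P2: "prob_space P2"
    and s1: "sets P1 = sets Q1" and s2: "sets P2 = sets Q2"
  shows "kl_loss (P1 \<Otimes>\<^sub>M P2) (Q1 \<Otimes>\<^sub>M Q2) = kl_loss P1 Q1 + kl_loss P2 Q2"
proof (cases "absolutely_continuous Q1 P1 \<and> absolutely_continuous Q2 P2")
  case True
  then obtain h1 h2 where "h1 \<in> borel_measurable Q1" "\<And>y. 0 \<le> h1 y" "P1 = density Q1 (\<lambda>y. ennreal (h1 y))"
    and "h2 \<in> borel_measurable Q2" "\<And>y. 0 \<le> h2 y" "P2 = density Q2 (\<lambda>y. ennreal (h2 y))"
    using real_density_exists[OF Q1 P1 s1] real_density_exists[OF Q2 P2 s2] by metis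
  then show ?thesis by (intro kl_loss_pair_density[OF Q1 Q2 P1 P2])
next
  case False
  then have "\<not> absolutely_continuous (Q1 \<Otimes>\<^sub>M Q2) (P1 \<Otimes>\<^sub>M P2)"
    using absolutely_continuous_pair_measureD[OF assms] by blast
  then show ?thesis using False by (auto simp: kl_loss_not_absolutely_continuous)
qed

lemma absolutely_continuous_distr:
  assumes sets: "sets N = sets M" and T: "T \<in> measurable M M'" and ac: "absolutely_continuous M N"
  shows "absolutely_continuous (distr M M' T) (distr N M' T)"
  unfolding absolutely_continuous_def
proof
  fix A assume null: "A \<in> null_sets (distr M M' T)"
  then have A: "A \<in> sets M'" by (simp add: null_sets_def)
  have "emeasure M (T -` A \<inter> space M) = 0"
    using null emeasure_distr[OF T A] by (simp add: null_sets_def)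
  moreover have "T -` A \<inter> space M \<in> sets M" using T A by (rule measurable_sets)
  ultimately have "T -` A \<inter> space M \<in> null_sets N"
    using ac unfolding absolutely_continuous_def by auto
  moreover have "T \<in> measurable N M'" using T unfolding measurable_cong_sets[OF sets refl] .
  ultimately show "A \<in> null_sets (distr N M' T)"
    using A sets_eq_imp_space_eq[OF sets] by (simp add: null_sets_def emeasure_distr)
qed

lemma distr_distr_inverse:
  assumes T: "T \<in> measurable M N" and T': "T' \<in> measurable N M"
    and inv: "\<And>x. x \<in> space M \<Longrightarrow> T' (T x) = x" and sP: "sets P = sets M"
  shows "distr (distr P N T) M T' = P"
proof -
  have T1: "T \<in> measurable P N" using T unfolding measurable_cong_sets[OF sP refl] .
  have sp: "space P = space M" using sP sets_eq_imp_space_eq by blast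
  have "distr (distr P N T) M T' = distr P M (\<lambda>x. T' (T x))"
    using distr_distr[OF T' T1] by (simp add: comp_def)
  also have "\<dots> = distr P P (\<lambda>x. x)"
    by (rule distr_cong) (auto simp: sP sp inv)
  finally show ?thesis by simp
qed

lemma kl_loss_distr_bij:
  assumes Q: "prob_space Q" and P: "prob_space P" and sP: "sets P = sets M" and sQ: "sets Q = sets M"
    and T[measurable]: "T \<in> measurable M N" and T'[measurable]: "T' \<in> measurable N M"
    and inv1: "\<And>x. x \<in> space M \<Longrightarrow> T' (T x) = x" and inv2: "\<And>y. y \<in> space N \<Longrightarrow> T (T' y) = y"
  shows "kl_loss (distr P N T) (distr Q N T) = kl_loss P Q"
proof (cases "absolutely_continuous Q P")
  case False
  have "\<not> absolutely_continuous (distr Q N T) (distr P N T)"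
  proof
    assume "absolutely_continuous (distr Q N T) (distr P N T)"
    then have "absolutely_continuous (distr (distr Q N T) M T') (distr (distr P N T) M T')"
      by (rule absolutely_continuous_distr[rotated 2]) (simp_all add: T')
    then show False using False distr_distr_inverse[OF T T' inv1] sP sQ by simp
  qed
  then show ?thesis using False by (simp add: kl_loss_not_absolutely_continuous)
next
  case True
  obtain h where h[measurable]: "h \<in> borel_measurable Q" and hnn: "\<And>y. 0 \<le> h y"
    and hP: "P = density Q (\<lambda>y. ennreal (h y))"
    using real_density_exists[OF Q P _ True] sP sQ by auto
  have hM[measurable]: "h \<in> borel_measurable M" using h unfolding measurable_cong_sets[OF sQ refl] .
  have TQ: "T \<in> measurable Q N" and TP: "T \<in> measurable P N"
    using T unfolding measurable_cong_sets[OF sQ refl] measurable_cong_sets[OF sP refl] by simp_all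
  have dens: "distr P N T = density (distr Q N T) (\<lambda>y. ennreal (h (T' y)))"
  proof -
    have "distr P N T = distr (density (distr (distr Q N T) M T') (\<lambda>y. ennreal (h y))) (distr Q N T) T"
      using hP distr_distr_inverse[OF T T' inv1 sQ] by (intro distr_cong) auto
    also have "\<dots> = density (distr Q N T) ((\<lambda>y. ennreal (h y)) \<circ> T')"
      by (rule distr_density_distr) (auto simp: inv2)
    finally show ?thesis by (simp add: comp_def)
  qed
  have spP: "space P = space M" using sP sets_eq_imp_space_eq by blast
  have "integrable (distr P N T) (\<lambda>y. ln (h (T' y))) = integrable P (\<lambda>x. ln (h (T' (T x))))"
    by (rule integrable_distr_eq[OF TP]) measurable
  also have "\<dots> = integrable P (\<lambda>x. ln (h x))"
    using inv1 by (intro Bochner_Integration.integrable_cong) (auto simp: spP)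
  finally have I: "integrable (distr P N T) (\<lambda>y. ln (h (T' y))) = integrable P (\<lambda>x. ln (h x))" .
  have "(\<integral>y. ln (h (T' y)) \<partial>distr P N T) = (\<integral>x. ln (h (T' (T x))) \<partial>P)"
    by (rule integral_distr[OF TP]) measurable
  also have "\<dots> = (\<integral>x. ln (h x) \<partial>P)"
    by (rule Bochner_Integration.integral_cong) (auto simp: spP inv1)
  finally show ?thesis
    using I kl_loss_density[OF Q h hnn hP]
      kl_loss_density[OF prob_space.prob_space_distr[OF Q TQ] _ _ dens] hnn by simp
qed

lemma kl_loss_PiM_insert:
  assumes iI: "i \<notin> I" and P: "\<And>j. prob_space (P j)" and Q: "\<And>j. prob_space (Q j)"
    and s: "\<And>j. sets (P j) = sets (Q j)"
  shows "kl_loss (PiM (insert i I) P) (PiM (insert i I) Q) = kl_loss (P i) (Q i) + kl_loss (PiM I P) (PiM I Q)"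
proof -
  define T where "T = (\<lambda>(x, X). X(i := x) :: 'a \<Rightarrow> 'b)"
  define T' where "T' = (\<lambda>\<omega>::'a \<Rightarrow> 'b. (\<omega> i, restrict \<omega> I))"
  have sPi: "sets (PiM J P) = sets (PiM J Q)" for J by (rule sets_PiM_cong) (auto simp: s)
  have dP: "distr (P i \<Otimes>\<^sub>M PiM I P) (PiM (insert i I) P) T = PiM (insert i I) P"
    unfolding T_def by (rule distr_pair_PiM_eq_PiM) (auto simp: P)
  have "distr (Q i \<Otimes>\<^sub>M PiM I Q) (PiM (insert i I) Q) T = PiM (insert i I) Q"
    unfolding T_def by (rule distr_pair_PiM_eq_PiM) (auto simp: Q)
  then have dQ: "distr (Q i \<Otimes>\<^sub>M PiM I Q) (PiM (insert i I) P) T = PiM (insert i I) Q"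
    by (subst distr_cong[OF refl sPi]) auto
  have inv1: "T' (T x) = x" if "x \<in> space (P i \<Otimes>\<^sub>M PiM I P)" for x
    using that iI by (auto simp: T_def T'_def space_pair_measure space_PiM PiE_def extensional_def fun_eq_iff)
  have inv2: "T (T' y) = y" if "y \<in> space (PiM (insert i I) P)" for y
    using that by (auto simp: space_PiM PiE_def extensional_def fun_eq_iff T_def T'_def)
  have "kl_loss (PiM (insert i I) P) (PiM (insert i I) Q) =
     kl_loss (distr (P i \<Otimes>\<^sub>M PiM I P) (PiM (insert i I) P) T) (distr (Q i \<Otimes>\<^sub>M PiM I Q) (PiM (insert i I) P) T)"
    by (simp add: dP dQ)
  also have "\<dots> = kl_loss (P i \<Otimes>\<^sub>M PiM I P) (Q i \<Otimes>\<^sub>M PiM I Q)"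
    by (rule kl_loss_distr_bij[OF _ _ refl _ _ _ inv1 inv2])
      (auto intro!: prob_space_pair prob_space_PiM sets_pair_measure_cong simp: P Q s sPi T_def T'_def)
  also have "\<dots> = kl_loss (P i) (Q i) + kl_loss (PiM I P) (PiM I Q)"
    by (rule kl_loss_pair_measure) (auto intro: prob_space_PiM simp: P Q s sPi)
  finally show ?thesis .
qed

lemma kl_loss_PiM_split:
  fixes P Q :: "nat \<Rightarrow> 'b measure"
  assumes P: "\<And>j. prob_space (P j)" and Q: "\<And>j. prob_space (Q j)"
    and s: "\<And>j. sets (P j) = sets (Q j)"
  shows "kl_loss (PiM UNIV P) (PiM UNIV Q) = (\<Sum>i<n. kl_loss (P i) (Q i)) + kl_loss (PiM {n..} P) (PiM {n..} Q)"
proof (induction n)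
  case (Suc n)
  have "{n..} = insert n {Suc n..}" by auto
  then have "kl_loss (PiM {n..} P) (PiM {n..} Q) = kl_loss (P n) (Q n) + kl_loss (PiM {Suc n..} P) (PiM {Suc n..} Q)"
    using kl_loss_PiM_insert[of n "{Suc n..}" P Q] P Q s by simp
  with Suc show ?case by (simp add: add.assoc)
qed simp

section \<open>Gaussian computations\<close>

lemma prob_space_normal_measure: "0 < v \<Longrightarrow> prob_space (normal_measure m v)"
  unfolding normal_measure_def by (rule prob_space_normal_density) simp

lemma sets_normal_measure [simp, measurable_cong]: "sets (normal_measure m v) = sets borel"
  unfolding normal_measure_def by simp

lemma ln_normal_density:
  assumes "0 < v"
  shows "ln (normal_density m (sqrt v) y) = - ln (2 * pi * v) / 2 - (y - m)\<^sup>2 / (2 * v)"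
proof -
  have "ln (normal_density m (sqrt v) y) = ln (1 / sqrt (2 * pi * v)) + ln (exp (-(y - m)\<^sup>2/ (2 * v)))"
    unfolding normal_density_def using assms by (subst ln_mult) auto
  also have "ln (1 / sqrt (2 * pi * v)) = - ln (2 * pi * v) / 2"
    using assms by (simp add: ln_div ln_sqrt)
  finally show ?thesis by simp
qed

lemma normal_measure_quadratic:
  assumes v: "0 < v"
  shows "integrable (normal_measure m v) (\<lambda>y. a + b * (y - m) + c * (y - m)\<^sup>2)"
    and "(\<integral>y. a + b * (y - m) + c * (y - m)\<^sup>2 \<partial>normal_measure m v) = a + c * v"
proof -
  interpret prob_space "normal_measure m v" using prob_space_normal_measure[OF v] .
  have sv: "0 < sqrt v" using v by simp
  have int: "integrable (normal_measure m v) (\<lambda>y. (y - m) ^ k)" for k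
    unfolding normal_measure_def
    by (subst integrable_density) (auto intro: integrable_normal_moment[OF sv])
  have "(\<integral>y. (y - m) ^ (2 * 1) \<partial>normal_measure m v) = v"
    unfolding normal_measure_def using integral_normal_moment_even[OF sv, of m 1] v
    by (subst integral_density) (auto simp: fact_numeral)
  moreover have "(\<integral>y. (y - m) ^ (2 * 0 + 1) \<partial>normal_measure m v) = 0"
    unfolding normal_measure_def using integral_normal_moment_odd[OF sv, of m 0]
    by (subst integral_density) auto
  ultimately show "integrable (normal_measure m v) (\<lambda>y. a + b * (y - m) + c * (y - m)\<^sup>2)"
    and "(\<integral>y. a + b * (y - m) + c * (y - m)\<^sup>2 \<partial>normal_measure m v) = a + c * v"
    using int[of 1] int[of 2] by (simp_all add: prob_space)
qed

lemma kl_loss_normal_measure: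
  assumes w1: "0 < w1" and w2: "0 < w2"
  shows "kl_loss (normal_measure m1 w1) (normal_measure m2 w2) =
    ennreal ((ln (w2 / w1) + (w1 + (m1 - m2)\<^sup>2) / w2 - 1) / 2)"
proof -
  define g1 where "g1 = normal_density m1 (sqrt w1)"
  define g2 where "g2 = normal_density m2 (sqrt w2)"
  define h where "h y = g1 y / g2 y" for y
  have g1p: "0 < g1 y" and g2p: "0 < g2 y" for y
    unfolding g1_def g2_def using w1 w2 by (simp_all add: normal_density_pos)
  have hnn: "0 \<le> h y" for y unfolding h_def using g1p[of y] g2p[of y] by simp
  have hm[measurable]: "h \<in> borel_measurable (normal_measure m2 w2)"
    unfolding h_def g1_def g2_def by measurable
  have dens: "normal_measure m1 w1 = density (normal_measure m2 w2) (\<lambda>y. ennreal (h y))"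
  proof -
    have "density (normal_measure m2 w2) (\<lambda>y. ennreal (h y)) =
          density lborel (\<lambda>y. ennreal (g2 y) * ennreal (h y))"
      unfolding normal_measure_def g2_def
      by (rule density_density_eq) (auto simp: h_def g1_def g2_def)
    also have "\<dots> = density lborel (\<lambda>y. ennreal (g1 y))"
    proof (rule density_cong)
      show "AE y in lborel. ennreal (g2 y) * ennreal (h y) = ennreal (g1 y)"
      proof (intro AE_I2)
        fix y show "ennreal (g2 y) * ennreal (h y) = ennreal (g1 y)"
          using g1p[of y] g2p[of y] by (simp add: h_def ennreal_mult[symmetric])
      qed
    qed (auto simp: h_def g1_def g2_def)
    finally show ?thesis unfolding normal_measure_def g1_def by simp
  qed
  define a where "a = ln (w2 / w1) / 2 + (m1 - m2)\<^sup>2 / (2 * w2)"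
  define b where "b = (m1 - m2) / w2"
  define c where "c = - 1 / (2 * w1) + 1 / (2 * w2)"
  have ln_h: "ln (h y) = a + b * (y - m1) + c * (y - m1)\<^sup>2" for y
  proof -
    have "ln (h y) = ln (g1 y) - ln (g2 y)" unfolding h_def using g1p[of y] g2p[of y] by (simp add: ln_div)
    also have "\<dots> = (ln w2 - ln w1) / 2 - (y - m1)\<^sup>2 / (2 * w1) + (y - m2)\<^sup>2 / (2 * w2)"
      unfolding g1_def g2_def using w1 w2 by (simp add: ln_normal_density ln_mult algebra_simps diff_divide_distrib add_divide_distrib)
    also have "\<dots> = a + b * (y - m1) + c * (y - m1)\<^sup>2"
      unfolding a_def b_def c_def using w1 w2 by (simp add: ln_div field_simps power2_eq_square)
    finally show ?thesis .
  qed
  have "kl_loss (normal_measure m1 w1) (normal_measure m2 w2) = ennreal (a + c * w1)"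
    unfolding kl_loss_density[OF prob_space_normal_measure[OF w2] hm hnn dens] ln_h
    using normal_measure_quadratic[OF w1] by simp
  also have "a + c * w1 = (ln (w2 / w1) + (w1 + (m1 - m2)\<^sup>2) / w2 - 1) / 2"
    unfolding a_def c_def using w1 w2 by (simp add: field_simps)
  finally show ?thesis .
qed

section \<open>Risk of the Gaussian-prior predictive distributions\<close>

definition shrinkage :: "real \<Rightarrow> real \<Rightarrow> real" where
  "shrinkage u t = t\<^sup>2 / (t\<^sup>2 + u)"

text \<open>With \<open>u = \<epsilon>\<^sup>2\<close>, \<open>w = \<epsilon>'\<^sup>2\<close> and shrinkage \<open>a\<close>, the predictive distribution of one coordinate is
  \<open>N(a x, a u + w)\<close>; \<open>coord_risk u w \<theta> a\<close> below is its expected KL loss.\<close>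
definition risk_var :: "real \<Rightarrow> real \<Rightarrow> real \<Rightarrow> real" where
  "risk_var u w a = (ln ((a * u + w) / w) + (w + a\<^sup>2 * u) / (a * u + w) - 1) / 2"

definition risk_bias :: "real \<Rightarrow> real \<Rightarrow> real \<Rightarrow> real \<Rightarrow> real" where
  "risk_bias u w \<theta> a = (1 - a)\<^sup>2 * \<theta>\<^sup>2 / (2 * (a * u + w))"

definition coord_risk :: "real \<Rightarrow> real \<Rightarrow> real \<Rightarrow> real \<Rightarrow> real" where
  "coord_risk u w \<theta> a = risk_var u w a + risk_bias u w \<theta> a"

definition kl_tail :: "real \<Rightarrow> (nat \<Rightarrow> real) \<Rightarrow> nat \<Rightarrow> ennreal" where
  "kl_tail w \<theta> d = kl_loss (PiM {d..} (\<lambda>i. normal_measure (\<theta> i) w)) (PiM {d..} (\<lambda>i. normal_measure 0 w))"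

lemma shrinkage_nonneg: "0 < u \<Longrightarrow> 0 \<le> shrinkage u t"
  unfolding shrinkage_def by (simp add: add_nonneg_pos)

lemma shrinkage_le_1: "0 < u \<Longrightarrow> shrinkage u t \<le> 1"
  unfolding shrinkage_def by (simp add: add_nonneg_pos divide_le_eq_1)

lemma one_minus_shrinkage:
  assumes "0 < u" shows "1 - shrinkage u t = u / (t\<^sup>2 + u)"
proof -
  have "0 < t\<^sup>2 + u" using assms by (simp add: add_nonneg_pos)
  then show ?thesis unfolding shrinkage_def by (simp add: field_simps)
qed

lemma shrinkage_mono:
  assumes u: "0 < u" and t: "0 \<le> t" "t \<le> t'"
  shows "shrinkage u t \<le> shrinkage u t'"
proof -
  have "t\<^sup>2 \<le> t'\<^sup>2" using t by (intro power_mono) auto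
  then have "u / (t'\<^sup>2 + u) \<le> u / (t\<^sup>2 + u)" using u by (intro divide_left_mono) (auto simp: add_nonneg_pos)
  then show ?thesis using one_minus_shrinkage[OF u, of t] one_minus_shrinkage[OF u, of t'] by simp
qed

lemma shrinkage_close_to_1:
  assumes u: "0 < u" and e: "0 < e" and M: "0 \<le> M"
  obtains t where "0 \<le> t" "(1 - shrinkage u t) * M \<le> e"
proof
  define t where "t = sqrt (u * (M + 1) / e)"
  have t2: "t\<^sup>2 = u * (M + 1) / e" unfolding t_def using u e M by simp
  then have t2pos: "0 < t\<^sup>2" using u e M by simp
  show "0 \<le> t" unfolding t_def using u e M by simp
  have "(1 - shrinkage u t) * M = u / (t\<^sup>2 + u) * M" by (simp add: one_minus_shrinkage[OF u])
  also have "\<dots> \<le> u / t\<^sup>2 * M"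
    using u t2pos M by (intro mult_right_mono divide_left_mono mult_pos_pos add_pos_pos) auto
  also have "u / t\<^sup>2 = e / (M + 1)" using u by (simp add: t2 divide_divide_eq_right)
  also have "e / (M + 1) * M = e * (M / (M + 1))" by simp
  also have "\<dots> \<le> e" using e M by (intro mult_left_le) auto
  finally show "(1 - shrinkage u t) * M \<le> e" .
qed

lemma risk_var_mono:
  assumes u: "0 < u" and w: "0 < w" and a: "0 \<le> a" "a \<le> a'"
  shows "risk_var u w a \<le> risk_var u w a'"
proof -
  define s where "s = a * u + w"
  define s' where "s' = a' * u + w"
  define h where "h = a' - a"
  have h: "0 \<le> h" using a unfolding h_def by simp
  have sp: "0 < s" and sp': "0 < s'" unfolding s_def s'_def using a u w by (simp_all add: add_nonneg_pos)
  have "ln (s / s') \<le> s / s' - 1" using sp sp' by (intro ln_le_minus_one) simp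
  then have l: "1 - s / s' \<le> ln s' - ln s" using sp sp' by (simp add: ln_div)
  have "(1 - s / s' + (w + a'\<^sup>2 * u) / s' - (w + a\<^sup>2 * u) / s) * (s * s') =
      s * s' - s * s + (w + a'\<^sup>2 * u) * s - (w + a\<^sup>2 * u) * s'"
    using sp sp' by (simp add: field_simps)
  also have "\<dots> = h * u * (a * u + a\<^sup>2 * u + 2 * a * w + h * s)"
    unfolding h_def s_def s'_def by (simp add: power2_eq_square algebra_simps)
  finally have eq: "1 - s / s' + (w + a'\<^sup>2 * u) / s' - (w + a\<^sup>2 * u) / s =
      h * u * (a * u + a\<^sup>2 * u + 2 * a * w + h * s) / (s * s')"
    using sp sp' by (simp add: eq_divide_eq)
  have "0 \<le> h * u * (a * u + a\<^sup>2 * u + 2 * a * w + h * s) / (s * s')"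
    using h u w a sp sp' by (intro divide_nonneg_pos mult_nonneg_nonneg add_nonneg_nonneg) auto
  then have "0 \<le> (ln s' - ln s) + (w + a'\<^sup>2 * u) / s' - (w + a\<^sup>2 * u) / s"
    using l eq by linarith
  then have "ln (s / w) + (w + a\<^sup>2 * u) / s \<le> ln (s' / w) + (w + a'\<^sup>2 * u) / s'"
    using w sp sp' by (simp add: ln_div)
  then show ?thesis unfolding risk_var_def s_def[symmetric] s'_def[symmetric]
    by (intro divide_right_mono diff_right_mono) auto
qed

lemma risk_var_nonneg: "0 < u \<Longrightarrow> 0 < w \<Longrightarrow> 0 \<le> a \<Longrightarrow> 0 \<le> risk_var u w a"
  using risk_var_mono[of u w 0 a] by (simp add: risk_var_def)

lemma risk_bias_nonneg: "0 < u \<Longrightarrow> 0 < w \<Longrightarrow> 0 \<le> a \<Longrightarrow> 0 \<le> risk_bias u w \<theta> a"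
  unfolding risk_bias_def by (intro divide_nonneg_pos) (auto simp: add_nonneg_pos)

lemma risk_bias_antimono:
  assumes u: "0 < u" and w: "0 < w" and a: "0 \<le> a" "a \<le> a'" "a' \<le> 1"
  shows "risk_bias u w \<theta> a' \<le> risk_bias u w \<theta> a"
proof -
  have s: "0 < a * u + w" using a u w by (simp add: add_nonneg_pos)
  have s': "a * u + w \<le> a' * u + w" using a u by (simp add: mult_right_mono)
  have "(1 - a')\<^sup>2 \<le> (1 - a)\<^sup>2" using a by (intro power_mono) auto
  then have n: "(1 - a')\<^sup>2 * \<theta>\<^sup>2 \<le> (1 - a)\<^sup>2 * \<theta>\<^sup>2" by (intro mult_right_mono) auto
  have "(1 - a')\<^sup>2 * \<theta>\<^sup>2 / (2 * (a' * u + w)) \<le> (1 - a')\<^sup>2 * \<theta>\<^sup>2 / (2 * (a * u + w))"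
    using s s' by (intro divide_left_mono) auto
  also have "\<dots> \<le> (1 - a)\<^sup>2 * \<theta>\<^sup>2 / (2 * (a * u + w))"
    using n s by (intro divide_right_mono) auto
  finally show ?thesis unfolding risk_bias_def .
qed

lemma coord_risk_nonneg: "0 < u \<Longrightarrow> 0 < w \<Longrightarrow> 0 \<le> a \<Longrightarrow> 0 \<le> coord_risk u w \<theta> a"
  unfolding coord_risk_def using risk_var_nonneg risk_bias_nonneg by (simp add: add_nonneg_nonneg)

lemma coord_risk_le_sup_var:
  assumes u: "0 < u" and w: "0 < w" and a: "0 \<le> a" "a \<le> 1"
  shows "coord_risk u w \<theta> a \<le> ln ((u + w) / w) / 2 + (1 - a) * \<theta>\<^sup>2 / (2 * w)"
proof -
  have "risk_var u w a \<le> risk_var u w 1" by (rule risk_var_mono[OF u w a])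
  also have "\<dots> = ln ((u + w) / w) / 2" using u w by (simp add: risk_var_def add.commute)
  finally have var: "risk_var u w a \<le> ln ((u + w) / w) / 2" .
  have "(1 - a)\<^sup>2 * \<theta>\<^sup>2 \<le> (1 - a) * \<theta>\<^sup>2"
    using a by (intro mult_right_mono) (auto simp: power2_eq_square mult_left_le)
  then have "(1 - a)\<^sup>2 * \<theta>\<^sup>2 / (2 * (a * u + w)) \<le> (1 - a) * \<theta>\<^sup>2 / (2 * (a * u + w))"
    using a u w by (intro divide_right_mono) auto
  also have "\<dots> \<le> (1 - a) * \<theta>\<^sup>2 / (2 * w)"
    using a u w by (intro divide_left_mono mult_nonneg_nonneg mult_pos_pos add_nonneg_pos) auto
  finally show ?thesis using var unfolding coord_risk_def risk_bias_def by simp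
qed

lemma kl_normal_formula_nonneg:
  fixes w s q :: real
  assumes w: "0 < w" and s: "0 < s" and q: "0 \<le> q"
  shows "0 \<le> (ln (s / w) + (w + q) / s - 1) / 2"
proof -
  have "ln (w / s) \<le> w / s - 1" by (rule ln_le_minus_one) (use w s in simp)
  then have "1 - w / s \<le> ln (s / w)" using w s by (simp add: ln_div)
  moreover have "w / s \<le> (w + q) / s" using s q by (simp add: divide_right_mono)
  ultimately show ?thesis by simp
qed

lemma nn_integral_kl_loss_normal_shrunk:
  assumes u: "0 < u" and w: "0 < w" and a: "0 \<le> a"
  shows "(\<integral>\<^sup>+y. kl_loss (normal_measure \<theta> w) (normal_measure (a * y) (a * u + w)) \<partial>normal_measure \<theta> u)
    = ennreal (coord_risk u w \<theta> a)"
proof -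
  define s where "s = a * u + w"
  have s: "0 < s" unfolding s_def using u w a by (simp add: add_nonneg_pos)
  define A where "A = (ln (s / w) + (w + (1 - a)\<^sup>2 * \<theta>\<^sup>2) / s - 1) / 2"
  define B where "B = - ((1 - a) * \<theta> * a) / s"
  define C where "C = a\<^sup>2 / (2 * s)"
  have eq: "(ln (s / w) + (w + (\<theta> - a * y)\<^sup>2) / s - 1) / 2 = A + B * (y - \<theta>) + C * (y - \<theta>)\<^sup>2" for y
    unfolding A_def B_def C_def using s by (simp add: field_simps power2_eq_square)
  have kl: "kl_loss (normal_measure \<theta> w) (normal_measure (a * y) s)
      = ennreal (A + B * (y - \<theta>) + C * (y - \<theta>)\<^sup>2)" for y
    by (subst kl_loss_normal_measure[OF w s]) (simp only: eq)
  have nn: "0 \<le> A + B * (y - \<theta>) + C * (y - \<theta>)\<^sup>2" for y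
    using kl_normal_formula_nonneg[OF w s, of "(\<theta> - a * y)\<^sup>2"] eq[of y] by simp
  have "(\<integral>\<^sup>+y. ennreal (A + B * (y - \<theta>) + C * (y - \<theta>)\<^sup>2) \<partial>normal_measure \<theta> u) = ennreal (A + C * u)"
    using nn_integral_eq_integral[OF normal_measure_quadratic(1)[OF u]] normal_measure_quadratic(2)[OF u] nn
    by simp
  also have "A + C * u = coord_risk u w \<theta> a"
    unfolding A_def C_def coord_risk_def risk_var_def risk_bias_def s_def using s
    by (simp add: field_simps s_def)
  finally show ?thesis unfolding s_def[symmetric] kl .
qed

lemma pred_G_eq_PiM:
  "pred_G eps eps' \<tau> x = PiM UNIV (\<lambda>i. normal_measure (shrinkage (eps\<^sup>2) (\<tau> i) * x i)
      (shrinkage (eps\<^sup>2) (\<tau> i) * eps\<^sup>2 + eps'\<^sup>2))"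
  unfolding pred_G_def gauss_seq_def shrinkage_def by (simp add: field_simps)

lemma kl_loss_pred_G:
  assumes eps: "0 < eps" and eps': "0 < eps'" and tail: "\<forall>i\<ge>d. \<tau> i = 0"
  defines "a \<equiv> \<lambda>i. shrinkage (eps\<^sup>2) (\<tau> i)"
  shows "kl_loss (gauss_seq \<theta> (\<lambda>_. eps'\<^sup>2)) (pred_G eps eps' \<tau> x) =
    (\<Sum>i<d. kl_loss (normal_measure (\<theta> i) (eps'\<^sup>2)) (normal_measure (a i * x i) (a i * eps\<^sup>2 + eps'\<^sup>2)))
    + kl_tail (eps'\<^sup>2) \<theta> d"
proof -
  have s: "0 < shrinkage (eps\<^sup>2) (\<tau> i) * eps\<^sup>2 + eps'\<^sup>2" for i
    using eps eps' shrinkage_nonneg[of "eps\<^sup>2"] by (simp add: add_nonneg_pos)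
  have "kl_loss (gauss_seq \<theta> (\<lambda>_. eps'\<^sup>2)) (pred_G eps eps' \<tau> x) =
     (\<Sum>i<d. kl_loss (normal_measure (\<theta> i) (eps'\<^sup>2)) (normal_measure (a i * x i) (a i * eps\<^sup>2 + eps'\<^sup>2))) +
     kl_loss (PiM {d..} (\<lambda>i. normal_measure (\<theta> i) (eps'\<^sup>2)))
       (PiM {d..} (\<lambda>i. normal_measure (a i * x i) (a i * eps\<^sup>2 + eps'\<^sup>2)))"
    unfolding pred_G_eq_PiM gauss_seq_def a_def using eps' s
    by (intro kl_loss_PiM_split) (auto intro: prob_space_normal_measure)
  also have "PiM {d..} (\<lambda>i. normal_measure (a i * x i) (a i * eps\<^sup>2 + eps'\<^sup>2))
      = PiM {d..} (\<lambda>i. normal_measure 0 (eps'\<^sup>2))"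
    using tail by (intro PiM_cong) (auto simp: a_def shrinkage_def)
  finally show ?thesis unfolding kl_tail_def .
qed

lemma nn_integral_PiM_component:
  assumes M: "\<And>i. prob_space (M i)" and f: "f \<in> borel_measurable (M i)"
  shows "(\<integral>\<^sup>+x. f (x i) \<partial>PiM UNIV M) = (\<integral>\<^sup>+y. f y \<partial>M i)"
proof -
  have "(\<integral>\<^sup>+y. f y \<partial>M i) = (\<integral>\<^sup>+y. f y \<partial>distr (PiM UNIV M) (M i) (\<lambda>\<omega>. \<omega> i))"
    by (simp add: distr_PiM_component M)
  also have "\<dots> = (\<integral>\<^sup>+x. f (x i) \<partial>PiM UNIV M)"
    by (rule nn_integral_distr) (auto simp: f)
  finally show ?thesis by simp
qed

lemma risk_pred_G:
  assumes eps: "0 < eps" and eps': "0 < eps'" and tail: "\<forall>i\<ge>d. \<tau> i = 0"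
  shows "risk eps eps' \<theta> (pred_G eps eps' \<tau>) =
    ennreal (\<Sum>i<d. coord_risk (eps\<^sup>2) (eps'\<^sup>2) (\<theta> i) (shrinkage (eps\<^sup>2) (\<tau> i))) + kl_tail (eps'\<^sup>2) \<theta> d"
proof -
  define a where "a i = shrinkage (eps\<^sup>2) (\<tau> i)" for i
  define k where "k i y = kl_loss (normal_measure (\<theta> i) (eps'\<^sup>2)) (normal_measure (a i * y) (a i * eps\<^sup>2 + eps'\<^sup>2))"
    for i y
  have u: "0 < eps\<^sup>2" and w: "0 < eps'\<^sup>2" using eps eps' by simp_all
  have a0: "0 \<le> a i" for i unfolding a_def using shrinkage_nonneg[OF u] .
  have PM: "\<And>i. prob_space (normal_measure (\<theta> i) (eps\<^sup>2))" using prob_space_normal_measure[OF u] by blast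
  interpret G: prob_space "gauss_seq \<theta> (\<lambda>_. eps\<^sup>2)" unfolding gauss_seq_def using PM by (rule prob_space_PiM)
  have km[measurable]: "k i \<in> borel_measurable (normal_measure m v)" for i m v
  proof -
    have "k i = (\<lambda>y. ennreal ((ln ((a i * eps\<^sup>2 + eps'\<^sup>2) / eps'\<^sup>2) +
        (eps'\<^sup>2 + (\<theta> i - a i * y)\<^sup>2) / (a i * eps\<^sup>2 + eps'\<^sup>2) - 1) / 2))"
      unfolding k_def using w a0[of i] u by (subst kl_loss_normal_measure) (auto simp: add_nonneg_pos)
    then show ?thesis by simp
  qed
  have kim: "(\<lambda>x. k i (x i)) \<in> borel_measurable (gauss_seq \<theta> (\<lambda>_. eps\<^sup>2))" for i
    unfolding gauss_seq_def by measurable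
  have "risk eps eps' \<theta> (pred_G eps eps' \<tau>)
      = (\<integral>\<^sup>+x. (\<Sum>i<d. k i (x i)) + kl_tail (eps'\<^sup>2) \<theta> d \<partial>gauss_seq \<theta> (\<lambda>_. eps\<^sup>2))"
    unfolding risk_def k_def a_def using kl_loss_pred_G[OF eps eps' tail] by simp
  also have "\<dots> = (\<Sum>i<d. \<integral>\<^sup>+x. k i (x i) \<partial>gauss_seq \<theta> (\<lambda>_. eps\<^sup>2)) + kl_tail (eps'\<^sup>2) \<theta> d"
    using kim by (subst nn_integral_add) (auto simp: nn_integral_sum G.emeasure_space_1)
  also have "(\<Sum>i<d. \<integral>\<^sup>+x. k i (x i) \<partial>gauss_seq \<theta> (\<lambda>_. eps\<^sup>2))
      = (\<Sum>i<d. ennreal (coord_risk (eps\<^sup>2) (eps'\<^sup>2) (\<theta> i) (a i)))"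
  proof (rule sum.cong[OF refl])
    fix i
    show "(\<integral>\<^sup>+x. k i (x i) \<partial>gauss_seq \<theta> (\<lambda>_. eps\<^sup>2)) = ennreal (coord_risk (eps\<^sup>2) (eps'\<^sup>2) (\<theta> i) (a i))"
      unfolding gauss_seq_def nn_integral_PiM_component[OF PM km] unfolding k_def
      by (rule nn_integral_kl_loss_normal_shrunk[OF u w a0])
  qed
  also have "\<dots> = ennreal (\<Sum>i<d. coord_risk (eps\<^sup>2) (eps'\<^sup>2) (\<theta> i) (a i))"
    using coord_risk_nonneg[OF u w a0] by (simp add: sum_ennreal)
  finally show ?thesis unfolding a_def .
qed

section \<open>Blockwise constant priors\<close>

lemma block_start_Suc: "block_start b (Suc j) = block_start b j + b j"
  unfolding block_start_def by simp

lemma block_start_mono: "m \<le> n \<Longrightarrow> block_start b m \<le> block_start b n"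
  unfolding block_start_def by (rule sum_mono2) auto

lemma card_block: "card (block b j) = b j"
  unfolding block_def block_start_Suc by simp

lemma block_subset_lessThan: "j < J \<Longrightarrow> block b j \<subseteq> {..<block_start b J}"
  using block_start_mono[of "Suc j" J b] unfolding block_def by auto

lemma block_unique:
  assumes "i \<in> block b j" "i \<in> block b j'" shows "j = j'"
proof (rule ccontr)
  assume "j \<noteq> j'"
  then consider "Suc j \<le> j'" | "Suc j' \<le> j" by linarith
  then show False
    by cases (use assms block_start_mono[of "Suc j" j' b] block_start_mono[of "Suc j'" j b] in
        \<open>auto simp: block_def\<close>)
qed

lemma sum_blocks: "(\<Sum>i<block_start b n. f i) = (\<Sum>j<n. \<Sum>i\<in>block b j. f i)"
proof (induction n)
  case (Suc n)
  have "(\<Sum>i<block_start b (Suc n). f i) = (\<Sum>i<block_start b n. f i) + (\<Sum>i\<in>block b n. f i)"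
    unfolding block_def lessThan_atLeast0
    by (rule sum.atLeastLessThan_concat[symmetric]) (auto simp: block_start_Suc)
  then show ?case using Suc by simp
qed (simp add: block_start_def)

definition block_index :: "(nat \<Rightarrow> nat) \<Rightarrow> nat \<Rightarrow> nat" where
  "block_index b i = (THE j. i \<in> block b j)"

text \<open>For antitone \<open>f\<close>, the value at the first index of a block is its maximum there.\<close>
definition block_sample :: "(nat \<Rightarrow> nat) \<Rightarrow> 'a \<Rightarrow> (nat \<Rightarrow> 'a) \<Rightarrow> nat \<Rightarrow> 'a" where
  "block_sample b x0 f i =
     (if block_index b i = 0 then x0 else f (block_start b (block_index b i)))"

lemma block_index_eq: "i \<in> block b j \<Longrightarrow> block_index b i = j"
  unfolding block_index_def using block_unique by blast

lemma block_sample_eq: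
  "i \<in> block b j \<Longrightarrow> block_sample b x0 f i = (if j = 0 then x0 else f (block_start b j))"
  unfolding block_sample_def by (simp add: block_index_eq)

lemma coord_risk_next_block_le:
  assumes u: "0 < u" and w: "0 < w"
    and pos: "0 < b (Suc j)" and ratio: "real (b (Suc j)) \<le> c * real (b j)"
    and anti: "\<And>i k. i \<le> k \<Longrightarrow> k < block_start b (Suc (Suc j)) \<Longrightarrow> a k \<le> a i"
    and a: "\<And>i. 0 \<le> a i \<and> a i \<le> 1"
  shows "(\<Sum>i\<in>block b (Suc j). coord_risk u w (\<theta> i) (a (block_start b (Suc j))))
    \<le> c * (\<Sum>i\<in>block b j. risk_var u w (a i)) + (\<Sum>i\<in>block b (Suc j). risk_bias u w (\<theta> i) (a i))"
proof -
  let ?s = "block_start b (Suc j)"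
  have "0 < c * real (b j)" using pos ratio by (meson of_nat_0_less_iff order_less_le_trans)
  then have c: "0 \<le> c" by (simp add: zero_less_mult_iff)
  have var: "risk_var u w (a ?s) \<le> risk_var u w (a i)" if "i \<in> block b j" for i
    using that a anti[of i ?s] pos block_start_Suc[of b "Suc j"]
    by (intro risk_var_mono[OF u w]) (auto simp: block_def)
  have bias: "risk_bias u w (\<theta> i) (a ?s) \<le> risk_bias u w (\<theta> i) (a i)" if "i \<in> block b (Suc j)" for i
    using that a anti[of ?s i] by (intro risk_bias_antimono[OF u w]) (auto simp: block_def)
  have "(\<Sum>i\<in>block b (Suc j). coord_risk u w (\<theta> i) (a ?s))
      \<le> real (b (Suc j)) * risk_var u w (a ?s) + (\<Sum>i\<in>block b (Suc j). risk_bias u w (\<theta> i) (a i))"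
    unfolding coord_risk_def sum.distrib using bias by (simp add: card_block sum_mono)
  also have "real (b (Suc j)) * risk_var u w (a ?s) \<le> c * (real (b j) * risk_var u w (a ?s))"
    using ratio risk_var_nonneg[OF u w] a by (simp add: mult.assoc[symmetric] mult_right_mono)
  also have "real (b j) * risk_var u w (a ?s) \<le> (\<Sum>i\<in>block b j. risk_var u w (a i))"
    using var sum_mono[of "block b j" "\<lambda>_. risk_var u w (a ?s)"] by (simp add: card_block)
  then have "c * (real (b j) * risk_var u w (a ?s)) \<le> c * (\<Sum>i\<in>block b j. risk_var u w (a i))"
    using c by (rule mult_left_mono)
  finally show ?thesis by simp
qed

lemma sum_coord_risk_block_sample_le:
  assumes u: "0 < u" and w: "0 < w" and c: "1 \<le> c"
    and cp: "consecutive_partition d b J" and J: "0 < J"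
    and ratio: "\<And>j. Suc j < J \<Longrightarrow> real (b (Suc j)) \<le> c * real (b j)"
    and anti: "\<And>i k. i \<le> k \<Longrightarrow> k < d \<Longrightarrow> a k \<le> a i"
    and a: "\<And>i. 0 \<le> a i \<and> a i \<le> 1"
  shows "(\<Sum>i<d. coord_risk u w (\<theta> i) (block_sample b x0 a i))
    \<le> (\<Sum>i\<in>block b 0. coord_risk u w (\<theta> i) x0) + c * (\<Sum>i<d. coord_risk u w (\<theta> i) (a i))"
proof -
  obtain J' where J': "J = Suc J'" using J by (cases J) auto
  have d: "d = block_start b J" and pos: "\<And>j. j < J \<Longrightarrow> 0 < b j"
    using cp by (auto simp: consecutive_partition_def block_start_def)
  define V where "V j = (\<Sum>i\<in>block b j. risk_var u w (a i))" for j
  define B where "B j = (\<Sum>i\<in>block b j. risk_bias u w (\<theta> i) (a i))" for j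
  have V0: "0 \<le> V j" and B0: "0 \<le> B j" for j
    unfolding V_def B_def using a risk_var_nonneg[OF u w] risk_bias_nonneg[OF u w] by (auto intro: sum_nonneg)
  have next_block: "(\<Sum>i\<in>block b (Suc j). coord_risk u w (\<theta> i) (a (block_start b (Suc j))))
      \<le> c * V j + B (Suc j)" if "j < J'" for j
    unfolding V_def B_def
  proof (rule coord_risk_next_block_le[OF u w])
    show "a k \<le> a i" if "i \<le> k" "k < block_start b (Suc (Suc j))" for i k
      using that \<open>j < J'\<close> block_start_mono[of "Suc (Suc j)" J b] anti unfolding d J' by force
  qed (use that a pos ratio J' in auto)
  have "(\<Sum>i<d. coord_risk u w (\<theta> i) (block_sample b x0 a i))
      = (\<Sum>i\<in>block b 0. coord_risk u w (\<theta> i) x0)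
        + (\<Sum>j<J'. \<Sum>i\<in>block b (Suc j). coord_risk u w (\<theta> i) (a (block_start b (Suc j))))"
    unfolding d sum_blocks J' sum.lessThan_Suc_shift by (simp add: block_sample_eq cong: sum.cong)
  also have "\<dots> \<le> (\<Sum>i\<in>block b 0. coord_risk u w (\<theta> i) x0) + (\<Sum>j<J'. c * V j + B (Suc j))"
    using next_block by (intro add_left_mono sum_mono) auto
  also have "(\<Sum>j<J'. c * V j + B (Suc j)) \<le> c * (\<Sum>j<J. V j) + (\<Sum>j<J. B j)"
    unfolding sum.distrib J' sum.lessThan_Suc_shift[of B] sum_distrib_left[symmetric]
    using c V0 B0 by (intro add_mono mult_left_mono) (auto intro: sum_nonneg)
  also have "\<dots> \<le> c * (\<Sum>i<d. coord_risk u w (\<theta> i) (a i))"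
  proof -
    have "0 \<le> (\<Sum>j<J. B j)" using B0 by (simp add: sum_nonneg)
    then have "(\<Sum>j<J. B j) \<le> c * (\<Sum>j<J. B j)"
      using c by (simp add: mult_le_cancel_right1)
    then show ?thesis
      unfolding d sum_blocks V_def B_def coord_risk_def sum.distrib distrib_left by simp
  qed
  finally show ?thesis by simp
qed

lemma sum_coord_risk_first_block_le:
  assumes u: "0 < u" and w: "0 < w" and x0: "0 \<le> x0" "x0 \<le> 1"
  shows "(\<Sum>i\<in>block b 0. coord_risk u w (\<theta> i) x0)
    \<le> real (b 0) * (ln ((u + w) / w) / 2) + (1 - x0) / (2 * w) * (\<Sum>i\<in>block b 0. (\<theta> i)\<^sup>2)"
proof -
  have "(\<Sum>i\<in>block b 0. coord_risk u w (\<theta> i) x0)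
      \<le> (\<Sum>i\<in>block b 0. ln ((u + w) / w) / 2 + (1 - x0) * (\<theta> i)\<^sup>2 / (2 * w))"
    by (intro sum_mono coord_risk_le_sup_var[OF u w x0])
  then show ?thesis by (simp add: sum.distrib card_block sum_distrib_left sum_divide_distrib)
qed

lemma sum_coord_risk_block_prior_le:
  assumes u: "0 < u" and w: "0 < w" and c: "1 \<le> c"
    and cp: "consecutive_partition d b J" and J: "0 < J"
    and ratio: "\<And>j. Suc j < J \<Longrightarrow> real (b (Suc j)) \<le> c * real (b j)"
    and anti: "\<And>i k. i \<le> k \<Longrightarrow> k < d \<Longrightarrow> \<tau> k \<le> \<tau> i" and nn: "\<And>i. 0 \<le> \<tau> i" and T: "0 \<le> T"
  shows "(\<Sum>i<d. coord_risk u w (\<theta> i) (shrinkage u (block_sample b T \<tau> i)))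
    \<le> real (b 0) * (ln ((u + w) / w) / 2) + (1 - shrinkage u T) / (2 * w) * (\<Sum>i\<in>block b 0. (\<theta> i)\<^sup>2)
      + c * (\<Sum>i<d. coord_risk u w (\<theta> i) (shrinkage u (\<tau> i)))"
proof -
  have "(\<Sum>i<d. coord_risk u w (\<theta> i) (shrinkage u (block_sample b T \<tau> i)))
      = (\<Sum>i<d. coord_risk u w (\<theta> i) (block_sample b (shrinkage u T) (\<lambda>i. shrinkage u (\<tau> i)) i))"
    by (intro sum.cong refl) (simp add: block_sample_def)
  also have "\<dots> \<le> (\<Sum>i\<in>block b 0. coord_risk u w (\<theta> i) (shrinkage u T))
      + c * (\<Sum>i<d. coord_risk u w (\<theta> i) (shrinkage u (\<tau> i)))"
    by (rule sum_coord_risk_block_sample_le[OF u w c cp J ratio])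
      (use anti nn shrinkage_nonneg[OF u] shrinkage_le_1[OF u] shrinkage_mono[OF u] in auto)
  also have "(\<Sum>i\<in>block b 0. coord_risk u w (\<theta> i) (shrinkage u T))
      \<le> real (b 0) * (ln ((u + w) / w) / 2) + (1 - shrinkage u T) / (2 * w) * (\<Sum>i\<in>block b 0. (\<theta> i)\<^sup>2)"
    by (rule sum_coord_risk_first_block_le[OF u w shrinkage_nonneg[OF u] shrinkage_le_1[OF u]])
  finally show ?thesis by simp
qed

lemma pred_G_block_sample_in_G_BW:
  assumes cp: "consecutive_partition d b J" and T: "0 \<le> T" and nn: "\<forall>i. 0 \<le> \<tau> i"
  shows "pred_G eps eps' (\<lambda>i. if i < d then block_sample b T \<tau> i else 0) \<in> G_BW eps eps' d b J"
  unfolding G_BW_def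
proof (intro CollectI exI conjI allI impI ballI)
  fix j i i' assume "j < J" "i \<in> block b j" "i' \<in> block b j"
  moreover have "block b j \<subseteq> {..<d}"
    using block_subset_lessThan[OF \<open>j < J\<close>, of b] cp
    by (simp add: consecutive_partition_def block_start_def)
  ultimately show "(if i < d then block_sample b T \<tau> i else 0) = (if i' < d then block_sample b T \<tau> i' else 0)"
    by (auto simp: block_sample_eq)
qed (use nn T in \<open>auto simp: block_sample_def\<close>)

section \<open>Comparison of the infima\<close>

lemma ennreal_mult_INF_add:
  fixes g :: "'a \<Rightarrow> ennreal"
  assumes "0 < c"
  shows "ennreal c * (INF y\<in>B. g y) + k = (INF y\<in>B. ennreal c * g y + k)"
proof (cases "B = {}")
  case True
  then show ?thesis using assms by (simp add: ennreal_mult_top)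
next
  case False
  have "mono (\<lambda>x. ennreal c * x + k)" by (intro monoI add_right_mono mult_left_mono) auto
  moreover have "continuous (at_right (Inf (g ` B))) (\<lambda>x. ennreal c * x + k)"
  proof -
    have "continuous_on UNIV (\<lambda>x. ennreal c * x + k)"
      by (intro continuous_on_add ennreal_continuous_on_cmult continuous_on_id continuous_on_const) auto
    then show ?thesis
      by (simp add: continuous_on_eq_continuous_within continuous_at_imp_continuous_at_within)
  qed
  ultimately show ?thesis
    using continuous_at_Inf_mono[of "\<lambda>x. ennreal c * x + k" "g ` B"] False by (simp add: image_comp)
qed

lemma INF_le_mult_INF_add_ennreal:
  fixes f :: "'a \<Rightarrow> ennreal" and g :: "'b \<Rightarrow> ennreal"
  assumes "0 < c"
    and approx: "\<And>y \<delta>. y \<in> B \<Longrightarrow> 0 < \<delta> \<Longrightarrow> \<exists>x\<in>A. f x \<le> ennreal c * g y + k + ennreal \<delta>"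
  shows "(INF x\<in>A. f x) \<le> ennreal c * (INF y\<in>B. g y) + k"
  unfolding ennreal_mult_INF_add[OF \<open>0 < c\<close>]
proof (rule INF_greatest, rule ennreal_le_epsilon)
  fix y \<delta> assume "y \<in> B" "0 < (\<delta>::real)"
  then obtain x where "x \<in> A" "f x \<le> ennreal c * g y + k + ennreal \<delta>" using approx by blast
  then show "(INF x\<in>A. f x) \<le> ennreal c * g y + k + ennreal \<delta>" by (meson INF_lower order_trans)
qed

lemma ennreal_add_le_mult_add:
  assumes "x \<le> c * y + k" "0 \<le> y" "1 \<le> c" "0 \<le> k"
  shows "ennreal x + K \<le> ennreal c * (ennreal y + K) + ennreal k"
proof -
  have "ennreal x \<le> ennreal (c * y + k)" using assms(1) by (rule ennreal_leI)
  also have "\<dots> = ennreal c * ennreal y + ennreal k" using assms by (simp add: ennreal_plus ennreal_mult)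
  finally have "ennreal x \<le> ennreal c * ennreal y + ennreal k" .
  moreover have "1 * K \<le> ennreal c * K" using assms(3) by (intro mult_right_mono) (auto simp: ennreal_ge_1)
  ultimately have "ennreal x + K \<le> ennreal c * ennreal y + ennreal k + ennreal c * K"
    by (intro add_mono) auto
  then show ?thesis by (simp add: distrib_left ac_simps)
qed

lemma G_BW_risk_le_G_mon_risk:
  assumes cp: "consecutive_partition d b J" and d: "0 < d"
    and ratio: "\<forall>j. Suc j < J \<longrightarrow> real (b (Suc j)) / real (b j) \<le> 1 + \<eta>" and \<eta>: "0 < \<eta>"
    and eps: "0 < eps" and eps': "0 < eps'"
    and Qm: "Qm \<in> G_mon eps eps' d" and \<delta>: "0 < \<delta>"
  shows "\<exists>Q\<in>G_BW eps eps' d b J. risk eps eps' \<theta> Q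
    \<le> ennreal (1 + \<eta>) * risk eps eps' \<theta> Qm + ennreal (real (b 0) / 2 * ln (eps\<^sup>2 / v2 eps eps')) + ennreal \<delta>"
proof -
  obtain \<tau> where Qm: "Qm = pred_G eps eps' \<tau>" and nn: "\<forall>i. 0 \<le> \<tau> i" and tail: "\<forall>i\<ge>d. \<tau> i = 0"
    and anti: "\<forall>i j. i \<le> j \<and> j < d \<longrightarrow> \<tau> j \<le> \<tau> i"
    using Qm unfolding G_mon_def by blast
  define u where "u = eps\<^sup>2"
  define w where "w = eps'\<^sup>2"
  have u: "0 < u" and w: "0 < w" unfolding u_def w_def using eps eps' by simp_all
  define C where "C = real (b 0) / 2 * ln (eps\<^sup>2 / v2 eps eps')"
  have "eps\<^sup>2 / v2 eps eps' = (u + w) / w"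
    unfolding v2_def u_def w_def using eps eps' by (simp add: field_simps)
  then have C: "C = real (b 0) * (ln ((u + w) / w) / 2)" unfolding C_def by simp
  have J: "0 < J" and bpos: "\<And>j. j < J \<Longrightarrow> 0 < b j"
    using cp d by (auto simp: consecutive_partition_def intro: Nat.gr0I)
  define M where "M = (\<Sum>i\<in>block b 0. (\<theta> i)\<^sup>2)"
  have "0 < 2 * w * \<delta>" and "0 \<le> M" using w \<delta> unfolding M_def by (simp_all add: sum_nonneg)
  then obtain T where T: "0 \<le> T" "(1 - shrinkage u T) * M \<le> 2 * w * \<delta>"
    using shrinkage_close_to_1[OF u] by blast
  then have bias: "(1 - shrinkage u T) / (2 * w) * M \<le> \<delta>"
    using w by (simp add: field_simps)
  define \<tau>' where "\<tau>' i = (if i < d then block_sample b T \<tau> i else 0)" for i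
  let ?S = "\<lambda>t. \<Sum>i<d. coord_risk u w (\<theta> i) (shrinkage u (t i))"
  have "?S \<tau>' = (\<Sum>i<d. coord_risk u w (\<theta> i) (shrinkage u (block_sample b T \<tau> i)))"
    by (simp add: \<tau>'_def)
  also have "\<dots> \<le> C + (1 - shrinkage u T) / (2 * w) * M + (1 + \<eta>) * ?S \<tau>"
    unfolding C M_def
  proof (rule sum_coord_risk_block_prior_le[OF u w _ cp J])
    show "real (b (Suc j)) \<le> (1 + \<eta>) * real (b j)" if "Suc j < J" for j
      using ratio that bpos[of j] by (simp add: divide_le_eq)
  qed (use \<eta> anti nn T in auto)
  finally have "?S \<tau>' \<le> (1 + \<eta>) * ?S \<tau> + (C + \<delta>)" using bias by simp
  moreover have "0 \<le> ?S \<tau>" using coord_risk_nonneg[OF u w shrinkage_nonneg[OF u]] by (simp add: sum_nonneg)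
  moreover have "0 \<le> C" unfolding C using u w by simp
  moreover have tail': "\<forall>i\<ge>d. \<tau>' i = 0" by (simp add: \<tau>'_def)
  ultimately have "risk eps eps' \<theta> (pred_G eps eps' \<tau>')
      \<le> ennreal (1 + \<eta>) * risk eps eps' \<theta> Qm + ennreal C + ennreal \<delta>"
    unfolding Qm risk_pred_G[OF eps eps' tail] risk_pred_G[OF eps eps' tail'] u_def[symmetric] w_def[symmetric]
    using ennreal_add_le_mult_add[of _ "1 + \<eta>" _ "C + \<delta>"] \<eta> \<delta> by (simp add: ennreal_plus add.assoc)
  moreover have "pred_G eps eps' \<tau>' \<in> G_BW eps eps' d b J"
    unfolding \<tau>'_def using pred_G_block_sample_in_G_BW[OF cp T(1) nn] .
  ultimately show ?thesis unfolding C_def by blast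
qed

theorem lemma4p3:
  fixes d J :: nat and b :: "nat \<Rightarrow> nat" and \<eta> eps eps' :: real and \<theta> :: "nat \<Rightarrow> real"
  assumes "0 < d" and "consecutive_partition d b J"
    and "\<forall>j. Suc j < J \<longrightarrow> real (b (Suc j)) / real (b j) \<le> 1 + \<eta>"
    and "0 < \<eta>"
    and "summable (\<lambda>i. (\<theta> i)\<^sup>2)"
    and "0 < eps" and "0 < eps'"
  shows "(INF Q\<in>G_BW eps eps' d b J. risk eps eps' \<theta> Q)
           \<le> ennreal (1 + \<eta>) * (INF Q\<in>G_mon eps eps' d. risk eps eps' \<theta> Q)
             + ennreal (real (b 0) / 2 * ln (eps\<^sup>2 / v2 eps eps'))"
proof (rule INF_le_mult_INF_add_ennreal)
  show "0 < 1 + \<eta>" using \<open>0 < \<eta>\<close> by simp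
qed (rule G_BW_risk_le_G_mon_risk[OF assms(2,1,3,4,6,7)])

end
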